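(* Let $p,q\ge 1$ be integers. For an integer $n\ge 1$, let $\mathcal{M}^{[1,1+n]}$ denote the Lie group whose underlying manifold is $\mathbb{R}\times\mathbb{R}^{n}$, with points written $\Upsilon=[\Upsilon_1,\boldsymbol{\Upsilon}_2]^\intercal$ ($\Upsilon_1\in\mathbb{R}$, $\boldsymbol{\Upsilon}_2\in\mathbb{R}^n$), and with group operation $$\Psi*\Upsilon=\begin{bmatrix}\Upsilon_1+\Psi_1\\ \boldsymbol{\Upsilon}_2+e^{-\Upsilon_1}\boldsymbol{\Psi}_2\end{bmatrix}.$$ Let $h:\mathcal{M}^{[1,1+q]}\to\mathcal{M}^{[1,1+p]}$ be a Lie group homomorphism whose image $h(\mathcal{M}^{[1,1+q]})$ has dimension greater than $1$. Then there exist a unique matrix $W\in\mathbb{R}^{p\times q}$ and a unique vector $\boldsymbol{b}\in\mathbb{R}^p$ such that for all $\Upsilon\in\mathcal{M}^{[1,1+q]}$, $$h(\Upsilon)=\begin{bmatrix}\Upsilon_1\\ W\boldsymbol{\Upsilon}_2+(1-e^{-\Upsilon_1})\,\boldsymbol{b}\end{bmatrix}.$$ Conversely, for every pair $(W,\boldsymbol{b})\in\mathbb{R}^{p\times q}\times\mathbb{R}^p$, the map $h$ defined by this formula is a Lie group homomorphism $\mathcal{M}^{[1,1+q]}\to\mathcal{M}^{[1,1+p]}$.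
   Context: The group $\mathcal{M}^{[1,1+n]}$ is the solvable Lie group metrically equivalent to the hyperbolic space $\mathbb{H}^{n+1}\simeq \mathrm{SO}(1,1+n)/\mathrm{SO}(1+n)$, described in "solvable coordinates" $\Upsilon=[\Upsilon_1,\boldsymbol{\Upsilon}_2]$; its identity element is $\Upsilon=\boldsymbol{0}$. Equivalently, it is the group of real $(n+2)\times(n+2)$ matrices $$\mathbb{L}(\Upsilon)=\begin{bmatrix}e^{\Upsilon_1}&\sqrt2 e^{\Upsilon_1}\boldsymbol{\Upsilon}_2^\intercal&-e^{\Upsilon_1}|\boldsymbol{\Upsilon}_2|^2\\0&\mathbb{I}_n&-\sqrt2\boldsymbol{\Upsilon}_2\\0&0&e^{-\Upsilon_1}\end{bmatrix}$$ under matrix multiplication, with $\mathbb{L}(\Psi*\Upsilon)=\mathbb{L}(\Psi)\mathbb{L}(\Upsilon)$. *)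

theory Defs
  imports "HOL-Analysis.Analysis"
begin

type_synonym 'n solv = "real \<times> (real ^ 'n)"

definition solv_mult :: "'n::finite solv \<Rightarrow> 'n solv \<Rightarrow> 'n solv" where
  "solv_mult \<Psi> \<Upsilon> = (fst \<Upsilon> + fst \<Psi>, snd \<Upsilon> + exp (- fst \<Upsilon>) *\<^sub>R snd \<Psi>)"

fun dir_deriv_iter ::
  "('a::real_normed_vector \<Rightarrow> 'b::real_normed_vector) \<Rightarrow> 'a list \<Rightarrow> 'a \<Rightarrow> 'b" where
  "dir_deriv_iter f [] = f"
| "dir_deriv_iter f (v # vs) =
     (\<lambda>x. vector_derivative (\<lambda>t. dir_deriv_iter f vs (x + t *\<^sub>R v)) (at 0))"

definition smooth_map ::
  "('a::euclidean_space \<Rightarrow> 'b::euclidean_space) \<Rightarrow> bool" where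
  "smooth_map f \<longleftrightarrow>
     (\<forall>vs. continuous_on UNIV (dir_deriv_iter f vs)) \<and>
     (\<forall>vs v x. ((\<lambda>t. dir_deriv_iter f vs (x + t *\<^sub>R v)) has_vector_derivative
                   dir_deriv_iter f (v # vs) x) (at 0))"

definition solv_lie_hom :: "('q::finite solv \<Rightarrow> 'p::finite solv) \<Rightarrow> bool" where
  "solv_lie_hom h \<longleftrightarrow> smooth_map h \<and>
     (\<forall>\<Psi> \<Upsilon>. h (solv_mult \<Psi> \<Upsilon>) = solv_mult (h \<Psi>) (h \<Upsilon>))"

text \<open>Dimension of the image of a Lie group homomorphism = dimension of the image
  immersed Lie subgroup = rank of its differential at the identity 0.\<close>
definition image_dim :: "('q::finite solv \<Rightarrow> 'p::finite solv) \<Rightarrow> nat" where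
  "image_dim h = dim (range (frechet_derivative h (at 0)))"

end

theory Submission
  imports Defs
begin

(* Write points as (t, v) and call (0, v) a translation and (t, 0) a dilation, so that
  (t, v) = (t, 0) * (0, v) = (0, e^t v) * (t, 0).
  The first coordinate of a continuous homomorphism h is a continuous homomorphism to (R, +)
  which kills translations, since those by v and by 2v are conjugate; hence fst (h x) = c fst x.
  On translations the second coordinate of h is continuous and additive, hence a linear map g,
  and conjugation gives g (e^t v) = e^(c t) g v. So if c <> 1, then g = 0, h factors through
  the first coordinate and its differential at 0 has rank at most 1. For c = 1 the
  second coordinate k on dilations is a cocycle, k (t + s) = k t + e^(-t) k s, whose solutions
  are k t = (1 - e^(-t)) b. Conversely the closed form is a homomorphism, and it is smooth
  because its directional derivatives stay in a finite-parameter family of maps of the same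
  shape. *)

lemma additive_continuous_scaleR_one:
  fixes f :: "real \<Rightarrow> 'a::real_normed_vector"
  assumes add: "\<And>x y. f (x + y) = f x + f y" and "continuous_on UNIV f"
  shows "f r = r *\<^sub>R f 1"
proof -
  interpret Modules.additive f by (rule additive.intro) (fact add)
  have of_nat: "f (of_nat n * x) = of_nat n *\<^sub>R f x" for n x
    by (induction n) (simp_all add: zero add distrib_right scaleR_add_left)
  have of_int: "f (of_int m * x) = of_int m *\<^sub>R f x" for m x
    by (cases m rule: int_cases2) (simp_all add: minus of_nat)
  have "\<rat> \<subseteq> {r. f r = r *\<^sub>R f 1}"
  proof
    fix r :: real
    assume "r \<in> \<rat>"
    then obtain a b where "b > 0" and r: "r = of_int a / of_int b"
      by (metis Rats_cases')
    have "of_int b *\<^sub>R f r = f (of_int a)"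
      using of_int[of b r] \<open>b > 0\<close> by (simp add: r)
    also have "\<dots> = of_int a *\<^sub>R f 1"
      using of_int[of a 1] by simp
    also have "\<dots> = of_int b *\<^sub>R r *\<^sub>R f 1"
      using \<open>b > 0\<close> by (simp add: r)
    finally show "r \<in> {r. f r = r *\<^sub>R f 1}"
      using \<open>b > 0\<close> by (simp del: scaleR_scaleR)
  qed
  moreover have "closed {r. f r = r *\<^sub>R f 1}"
    by (intro closed_Collect_eq assms(2) continuous_intros)
  ultimately have "closure \<rat> \<subseteq> {r. f r = r *\<^sub>R f 1}"
    by (rule closure_minimal)
  then show ?thesis
    unfolding Rats_closure_real by blast
qed

lemma additive_continuous_imp_linear:
  fixes f :: "'a::real_normed_vector \<Rightarrow> 'b::real_normed_vector"
  assumes add: "\<And>x y. f (x + y) = f x + f y" and "continuous_on UNIV f"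
  shows "linear f"
proof (rule linearI)
  show "f (x + y) = f x + f y" for x y
    by (fact add)
  show "f (r *\<^sub>R x) = r *\<^sub>R f x" for r x
  proof -
    have "f ((s + t) *\<^sub>R x) = f (s *\<^sub>R x) + f (t *\<^sub>R x)" for s t
      by (simp add: scaleR_add_left add)
    moreover have "continuous_on UNIV (\<lambda>r. f (r *\<^sub>R x))"
      by (intro continuous_on_compose2[OF assms(2)] continuous_intros) auto
    ultimately show ?thesis
      by (subst additive_continuous_scaleR_one) simp_all
  qed
qed

lemma exp_cocycle_eq:
  fixes k :: "real \<Rightarrow> 'a::real_vector"
  assumes "c \<noteq> 0" and cocycle: "\<And>t s. k (t + s) = k t + exp (- (c * t)) *\<^sub>R k s"
  shows "k t = ((1 - exp (- (c * t))) / (1 - exp (- c))) *\<^sub>R k 1"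
proof -
  have "k t + exp (- (c * t)) *\<^sub>R k 1 = k 1 + exp (- c) *\<^sub>R k t"
    using cocycle[of t 1] cocycle[of 1 t] by (simp add: add.commute)
  then have eq: "(1 - exp (- c)) *\<^sub>R k t = (1 - exp (- (c * t))) *\<^sub>R k 1"
    by (simp add: algebra_simps)
  have "k t = inverse (1 - exp (- c)) *\<^sub>R (1 - exp (- c)) *\<^sub>R k t"
    using \<open>c \<noteq> 0\<close> by simp
  also have "\<dots> = ((1 - exp (- (c * t))) / (1 - exp (- c))) *\<^sub>R k 1"
    unfolding eq by (simp add: divide_inverse mult.commute)
  finally show ?thesis .
qed

lemma smooth_map_imp_continuous: "smooth_map f \<Longrightarrow> continuous_on UNIV f"
  unfolding smooth_map_def by (metis dir_deriv_iter.simps(1))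

lemma smooth_map_imp_directional_derivative:
  assumes "smooth_map f"
  shows "((\<lambda>t. f (x + t *\<^sub>R v)) has_vector_derivative dir_deriv_iter f [v] x) (at 0)"
  using assms unfolding smooth_map_def by (metis dir_deriv_iter.simps(1))

lemma smooth_map_if_derivative_closed:
  fixes S :: "('a::euclidean_space \<Rightarrow> 'b::euclidean_space) set"
  assumes "f \<in> S"
    and continuous: "\<And>g. g \<in> S \<Longrightarrow> continuous_on UNIV g"
    and derivative: "\<And>g v. g \<in> S \<Longrightarrow>
      \<exists>g'\<in>S. \<forall>x. ((\<lambda>t. g (x + t *\<^sub>R v)) has_vector_derivative g' x) (at 0)"
  shows "smooth_map f"
proof -
  have derivative_iter: "dir_deriv_iter f (v # vs) \<in> S \<and>
      (\<forall>x. ((\<lambda>t. dir_deriv_iter f vs (x + t *\<^sub>R v)) has_vector_derivative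
              dir_deriv_iter f (v # vs) x) (at 0))"
    if vs: "dir_deriv_iter f vs \<in> S" for v vs
  proof -
    obtain g' where "g' \<in> S"
      and g': "\<forall>x. ((\<lambda>t. dir_deriv_iter f vs (x + t *\<^sub>R v)) has_vector_derivative g' x) (at 0)"
      using derivative[OF vs] by blast
    then have "dir_deriv_iter f (v # vs) = g'"
      by (simp add: fun_eq_iff vector_derivative_at)
    with \<open>g' \<in> S\<close> g' show ?thesis
      by simp
  qed
  have iter: "dir_deriv_iter f vs \<in> S" for vs
    by (induction vs) (use \<open>f \<in> S\<close> derivative_iter in auto)
  show ?thesis
    unfolding smooth_map_def using iter continuous derivative_iter by blast
qed

definition exp_affine_map ::
  "real \<Rightarrow> real \<Rightarrow> real ^ 'p \<Rightarrow> real ^ 'q ^ 'p \<Rightarrow> real \<Rightarrow> real ^ 'p \<Rightarrow> 'q::finite solv \<Rightarrow> 'p::finite solv"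
  where "exp_affine_map a \<alpha> d A \<beta> b x = (a + \<alpha> * fst x, d + A *v snd x + (\<beta> * exp (- fst x)) *\<^sub>R b)"

lemma exp_affine_map_directional_derivative:
  "((\<lambda>t. exp_affine_map a \<alpha> d A \<beta> b (x + t *\<^sub>R v)) has_vector_derivative
      exp_affine_map (\<alpha> * fst v) 0 (A *v snd v) 0 (- \<beta> * fst v) b x) (at 0)"
proof -
  have eq: "(\<lambda>t. exp_affine_map a \<alpha> d A \<beta> b (x + t *\<^sub>R v)) = (\<lambda>t.
      (a + \<alpha> * (fst x + t * fst v),
       d + A *v snd x + t *\<^sub>R (A *v snd v) + (\<beta> * exp (- (fst x + t * fst v))) *\<^sub>R b))"
    by (simp add: fun_eq_iff exp_affine_map_def matrix_vector_right_distrib matrix_vector_mult_scaleR)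
  have "((\<lambda>t. a + \<alpha> * (fst x + t * fst v)) has_vector_derivative \<alpha> * fst v) (at 0)"
    by (auto intro!: derivative_eq_intros simp flip: has_real_derivative_iff_has_vector_derivative)
  moreover have "((\<lambda>t. d + A *v snd x + t *\<^sub>R (A *v snd v) + (\<beta> * exp (- (fst x + t * fst v))) *\<^sub>R b)
      has_vector_derivative A *v snd v + (- \<beta> * fst v * exp (- fst x)) *\<^sub>R b) (at 0)"
    by (auto intro!: derivative_eq_intros simp flip: has_real_derivative_iff_has_vector_derivative)
  ultimately show ?thesis
    unfolding eq
    by (rule has_vector_derivative_Pair[THEN has_vector_derivative_eq_rhs]) (simp add: exp_affine_map_def)
qed

lemma continuous_on_exp_affine_map: "continuous_on UNIV (exp_affine_map a \<alpha> d A \<beta> b)"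
  unfolding exp_affine_map_def
  by (intro continuous_intros
      continuous_on_compose2[OF matrix_vector_mult_linear_continuous_on[of UNIV A], of UNIV snd]) auto

lemma smooth_map_exp_affine_map: "smooth_map (exp_affine_map a \<alpha> d A \<beta> b)"
proof (rule smooth_map_if_derivative_closed)
  let ?S = "range (\<lambda>(a, \<alpha>, d, A, \<beta>). exp_affine_map a \<alpha> d A \<beta> b)"
  show "exp_affine_map a \<alpha> d A \<beta> b \<in> ?S"
    by (rule image_eqI[where x = "(a, \<alpha>, d, A, \<beta>)"]) simp_all
  fix g
  assume "g \<in> ?S"
  then obtain a' \<alpha>' d' A' \<beta>' where g: "g = exp_affine_map a' \<alpha>' d' A' \<beta>' b"
    by auto
  then show "continuous_on UNIV g"
    by (simp add: continuous_on_exp_affine_map)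
  fix v
  let ?g' = "exp_affine_map (\<alpha>' * fst v) 0 (A' *v snd v) 0 (- \<beta>' * fst v) b"
  have "?g' \<in> ?S"
    by (rule image_eqI[where x = "(\<alpha>' * fst v, 0, A' *v snd v, 0, - \<beta>' * fst v)"]) simp_all
  then show "\<exists>g'\<in>?S. \<forall>x. ((\<lambda>t. g (x + t *\<^sub>R v)) has_vector_derivative g' x) (at 0)"
    unfolding g using exp_affine_map_directional_derivative by blast
qed

lemma image_dim_le_1_if_factors_through_fst:
  fixes h :: "'q::finite solv \<Rightarrow> 'p::finite solv"
  assumes "\<And>x. h x = F (fst x)" and "(F has_vector_derivative w) (at 0)"
  shows "image_dim h \<le> 1"
proof -
  have "h = F \<circ> fst"
    using assms(1) by auto
  moreover have "(fst has_derivative fst) (at (0 :: 'q solv))"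
    by (rule bounded_linear_imp_has_derivative[OF bounded_linear_fst])
  moreover have "(F has_derivative (\<lambda>t. t *\<^sub>R w)) (at (fst (0 :: 'q solv)))"
    using assms(2) by (simp add: has_vector_derivative_def)
  ultimately have "(h has_derivative (\<lambda>t. t *\<^sub>R w) \<circ> fst) (at 0)"
    by (simp add: diff_chain_at)
  then have "range (frechet_derivative h (at 0)) \<subseteq> span {w}"
    by (auto simp: frechet_derivative_at[symmetric] span_singleton)
  then have "dim (range (frechet_derivative h (at 0))) \<le> card {w}"
    by (intro dim_le_card) auto
  then show ?thesis
    unfolding image_dim_def by simp
qed

definition solv_affine_hom :: "real ^ 'q ^ 'p \<Rightarrow> real ^ 'p \<Rightarrow> 'q::finite solv \<Rightarrow> 'p::finite solv"
  where "solv_affine_hom W b \<Upsilon> = (fst \<Upsilon>, W *v snd \<Upsilon> + (1 - exp (- fst \<Upsilon>)) *\<^sub>R b)"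

lemma solv_affine_hom_mult:
  "solv_affine_hom W b (solv_mult \<Psi> \<Upsilon>) = solv_mult (solv_affine_hom W b \<Psi>) (solv_affine_hom W b \<Upsilon>)"
  by (simp add: solv_affine_hom_def solv_mult_def algebra_simps exp_diff flip: exp_add)

lemma solv_lie_hom_solv_affine_hom: "solv_lie_hom (solv_affine_hom W b)"
proof -
  have "solv_affine_hom W b = exp_affine_map 0 1 b W (- 1) b"
    by (simp add: fun_eq_iff solv_affine_hom_def exp_affine_map_def algebra_simps)
  then have "smooth_map (solv_affine_hom W b)"
    by (simp add: smooth_map_exp_affine_map)
  then show ?thesis
    by (simp add: solv_lie_hom_def solv_affine_hom_mult)
qed

lemma solv_affine_hom_inject:
  assumes "solv_affine_hom W b = solv_affine_hom W' b'"
  shows "W = W'" and "b = b'"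
proof -
  have "W *v v = W' *v v" for v
    using fun_cong[OF assms, of "(0, v)"] by (simp add: solv_affine_hom_def)
  then show "W = W'"
    by (simp add: matrix_eq)
  have "(1 - exp (- 1 :: real)) *\<^sub>R b = (1 - exp (- 1)) *\<^sub>R b'"
    using fun_cong[OF assms, of "(1, 0)"] by (simp add: solv_affine_hom_def)
  then show "b = b'"
    by simp
qed

lemma solv_mult_dilation_translation: "solv_mult (t, 0) (0, v) = (t, v)"
  by (simp add: solv_mult_def)

lemma solv_mult_translation_dilation: "solv_mult (0, exp t *\<^sub>R v) (t, 0) = (t, v)"
  by (simp add: solv_mult_def flip: exp_add)

lemma solv_mult_translations: "solv_mult (0, u) (0, v) = (0, v + u)"
  by (simp add: solv_mult_def)

lemma solv_mult_dilations: "solv_mult (s, 0) (t, 0) = (t + s, 0)"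
  by (simp add: solv_mult_def)

locale solv_hom =
  fixes h :: "'q::finite solv \<Rightarrow> 'p::finite solv"
  assumes mult: "h (solv_mult \<Psi> \<Upsilon>) = solv_mult (h \<Psi>) (h \<Upsilon>)"
    and continuous: "continuous_on UNIV h"
begin

definition rate :: real
  where "rate = fst (h (1, 0))"

lemma fst_mult: "fst (h (solv_mult \<Psi> \<Upsilon>)) = fst (h \<Upsilon>) + fst (h \<Psi>)"
  unfolding mult by (simp add: solv_mult_def)

lemma snd_mult: "snd (h (solv_mult \<Psi> \<Upsilon>)) = snd (h \<Upsilon>) + exp (- fst (h \<Upsilon>)) *\<^sub>R snd (h \<Psi>)"
  unfolding mult by (simp add: solv_mult_def)

lemma continuous_on_coordinate_lines:
  "continuous_on UNIV (\<lambda>t. f (h (t, v)))" "continuous_on UNIV (\<lambda>v. f (h (t, v)))"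
  if "continuous_on UNIV f"
  using that
  by (auto intro!: continuous_on_compose2[OF that] continuous_on_compose2[OF continuous] continuous_intros)

lemma fst_translation: "fst (h (0, v)) = 0"
proof -
  \<comment> \<open>the translations by \<open>v\<close> and \<open>2v\<close> are conjugate under the dilation by \<open>ln 2\<close>\<close>
  have "fst (h (0, v)) + fst (h (t, 0)) = fst (h (t, 0)) + fst (h (0, exp t *\<^sub>R v))" for t
    using fst_mult[of "(t, 0)" "(0, v)"] fst_mult[of "(0, exp t *\<^sub>R v)" "(t, 0)"]
    by (simp add: solv_mult_dilation_translation solv_mult_translation_dilation)
  from this[of "ln 2"] have "fst (h (0, v)) = fst (h (0, v + v))"
    by (simp add: scaleR_2)
  also have "\<dots> = fst (h (0, v)) + fst (h (0, v))"
    using fst_mult[of "(0, v)" "(0, v)"] by (simp add: solv_mult_translations)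
  finally show ?thesis
    by simp
qed

lemma fst_apply: "fst (h x) = rate * fst x"
proof -
  have "fst (h (t + s, 0)) = fst (h (t, 0)) + fst (h (s, 0))" for t s
    using fst_mult[of "(s, 0)" "(t, 0)"] by (simp add: solv_mult_dilations)
  moreover have "continuous_on UNIV (\<lambda>t. fst (h (t, 0)))"
    by (intro continuous_on_coordinate_lines continuous_on_fst continuous_on_id)
  ultimately have "fst (h (t, 0)) = rate * t" for t
    unfolding rate_def by (subst additive_continuous_scaleR_one) (simp_all add: mult.commute)
  then show ?thesis
    using fst_mult[of "(fst x, 0)" "(0, snd x)"]
    by (simp add: solv_mult_dilation_translation fst_translation)
qed

lemma snd_apply: "snd (h (t, v)) = snd (h (0, v)) + snd (h (t, 0))"
  using snd_mult[of "(t, 0)" "(0, v)"] by (simp add: solv_mult_dilation_translation fst_apply)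

lemma linear_translation_part: "linear (\<lambda>v. snd (h (0, v)))"
proof (rule additive_continuous_imp_linear)
  show "snd (h (0, u + v)) = snd (h (0, u)) + snd (h (0, v))" for u v
    using snd_mult[of "(0, v)" "(0, u)"] by (simp add: solv_mult_translations fst_apply)
  show "continuous_on UNIV (\<lambda>v. snd (h (0, v)))"
    by (intro continuous_on_coordinate_lines continuous_on_snd continuous_on_id)
qed

lemma translation_part_dilate: "snd (h (0, exp t *\<^sub>R v)) = exp (rate * t) *\<^sub>R snd (h (0, v))"
proof -
  have "snd (h (t, v)) = snd (h (t, 0)) + exp (- (rate * t)) *\<^sub>R snd (h (0, exp t *\<^sub>R v))"
    using snd_mult[of "(0, exp t *\<^sub>R v)" "(t, 0)"] by (simp add: solv_mult_translation_dilation fst_apply)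
  then have "snd (h (0, v)) = exp (- (rate * t)) *\<^sub>R snd (h (0, exp t *\<^sub>R v))"
    using snd_apply[of t v] by simp
  then show ?thesis
    by (simp add: exp_minus)
qed

lemma translation_part_eq_0:
  assumes "rate \<noteq> 1"
  shows "snd (h (0, v)) = 0"
proof -
  have "exp 1 *\<^sub>R snd (h (0, v)) = exp rate *\<^sub>R snd (h (0, v))"
    using translation_part_dilate[of 1 v] linear.scaleR[OF linear_translation_part] by simp
  with assms show ?thesis
    by simp
qed

lemma dilation_part_cocycle:
  "snd (h (t + s, 0)) = snd (h (t, 0)) + exp (- (rate * t)) *\<^sub>R snd (h (s, 0))"
  using snd_mult[of "(s, 0)" "(t, 0)"] by (simp add: solv_mult_dilations fst_apply)

end

lemma solv_lie_hom_imp_solv_hom: "solv_lie_hom h \<Longrightarrow> solv_hom h"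
  unfolding solv_lie_hom_def by (auto intro!: solv_hom.intro smooth_map_imp_continuous)

lemma solv_lie_hom_eq_solv_affine_hom:
  fixes h :: "'q::finite solv \<Rightarrow> 'p::finite solv"
  assumes "solv_lie_hom h" and "image_dim h > 1"
  obtains W b where "h = solv_affine_hom W b"
proof -
  interpret solv_hom h
    using assms(1) by (rule solv_lie_hom_imp_solv_hom)
  have "rate = 1"
  proof (rule ccontr)
    assume "rate \<noteq> 1"
    then have "h x = h (fst x, 0)" for x
      using fst_apply[of x] fst_apply[of "(fst x, 0)"] snd_apply[of "fst x" "snd x"]
      by (simp add: prod_eq_iff translation_part_eq_0)
    moreover have "((\<lambda>t. h (t, 0)) has_vector_derivative dir_deriv_iter h [(1, 0)] 0) (at 0)"
      using smooth_map_imp_directional_derivative[of h 0 "(1, 0)"] assms(1)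
      by (simp add: solv_lie_hom_def)
    ultimately have "image_dim h \<le> 1"
      by (rule image_dim_le_1_if_factors_through_fst)
    with assms(2) show False
      by simp
  qed
  define W where "W = matrix (\<lambda>v. snd (h (0, v)))"
  define b where "b = inverse (1 - exp (- 1)) *\<^sub>R snd (h (1, 0))"
  have "snd (h (t, 0)) = (1 - exp (- t)) *\<^sub>R b" for t
    using exp_cocycle_eq[of 1 "\<lambda>t. snd (h (t, 0))" t] dilation_part_cocycle \<open>rate = 1\<close>
    by (simp add: b_def divide_inverse)
  moreover have "snd (h (0, v)) = W *v v" for v
    by (simp add: W_def matrix_works linear_translation_part)
  ultimately have "h (t, v) = solv_affine_hom W b (t, v)" for t v
    using fst_apply[of "(t, v)"] snd_apply[of t v] \<open>rate = 1\<close>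
    by (simp add: solv_affine_hom_def prod_eq_iff)
  then show thesis
    by (intro that) auto
qed

theorem theorem2:
  shows "(\<forall>h :: 'q::finite solv \<Rightarrow> 'p::finite solv.
            solv_lie_hom h \<and> image_dim h > 1 \<longrightarrow>
            (\<exists>!Wb :: (real ^ 'q ^ 'p) \<times> (real ^ 'p).
               \<forall>\<Upsilon>. h \<Upsilon> = (fst \<Upsilon>, fst Wb *v snd \<Upsilon> + (1 - exp (- fst \<Upsilon>)) *\<^sub>R snd Wb)))
       \<and> (\<forall>(W :: real ^ 'q ^ 'p) (b :: real ^ 'p).
            solv_lie_hom (\<lambda>\<Upsilon> :: 'q solv.
               (fst \<Upsilon>, W *v snd \<Upsilon> + (1 - exp (- fst \<Upsilon>)) *\<^sub>R b)))"
  unfolding solv_affine_hom_def[symmetric]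
proof (intro conjI allI impI)
  fix h :: "'q solv \<Rightarrow> 'p solv"
  assume "solv_lie_hom h \<and> image_dim h > 1"
  then obtain W b where h: "h = solv_affine_hom W b"
    using solv_lie_hom_eq_solv_affine_hom by blast
  show "\<exists>!Wb. \<forall>\<Upsilon>. h \<Upsilon> = solv_affine_hom (fst Wb) (snd Wb) \<Upsilon>"
  proof (rule ex1I[of _ "(W, b)"])
    fix Wb :: "(real ^ 'q ^ 'p) \<times> (real ^ 'p)"
    assume "\<forall>\<Upsilon>. h \<Upsilon> = solv_affine_hom (fst Wb) (snd Wb) \<Upsilon>"
    then have "solv_affine_hom W b = solv_affine_hom (fst Wb) (snd Wb)"
      by (simp add: h fun_eq_iff)
    then show "Wb = (W, b)"
      using solv_affine_hom_inject by (metis prod.collapse)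
  qed (simp add: h)
qed (rule solv_lie_hom_solv_affine_hom)

end
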